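(* Let $\mathcal{S}\subseteq\mathcal{L}$, let $\mathcal{AF}_{\vdash}=(\vdash,\overline{\cdot},\mathsf{id})$ be contrapositable with $\vdash$ satisfying Cut, and let $\Theta$ be a maximal $\mathcal{AF}_{\vdash}(\mathcal{S})$-consistent subset of $\mathcal{S}$. Then $\mathit{Arg}_{\vdash}(\Theta)$ is a stable extension of $\mathcal{AF}_{\mathsf{con}}(\mathcal{S})$.
   Context: $\mathcal{L}$ is a set of formulas; ${\vdash}\subseteq\wp_{\sf fin}(\mathcal{L})\times\mathcal{L}$ is arbitrary and $\overline{\cdot}:\mathcal{L}\to\wp(\mathcal{L})$. $\mathit{Arg}_{\vdash}(\mathcal{S})=\{(\Gamma,\gamma):\Gamma\subseteq\mathcal{S}\text{ finite},\Gamma\vdash\gamma\}$. For a relation $\vdash'$, $\mathcal{AF}_{\vdash'}(\mathcal{S})$ has arguments $\mathit{Arg}_{\vdash'}(\mathcal{S})$, with $(\Gamma,\gamma)$ attacking $(\Gamma',\gamma')$ iff $\gamma\in\overline{\lambda}$ for some $\lambda\in\Gamma'$. A stable extension is a conflict-free set of arguments that attacks every argument not in it. $\vdash^{+\phi}$ is the transitive closure of ${\vdash}\cup\{(\emptyset,\phi)\}$; Cut: for every $\phi$ and finite $\Gamma,\Delta$, if $\Gamma\vdash\phi$ and $\Delta\vdash^{+\phi}\gamma$ then $\Gamma\cup\Delta\vdash\gamma$. Contrapositable: for all finite $\Theta$, if $\Theta\vdash\gamma'$ with $\gamma'\in\overline{\gamma}$, then for every $\sigma\in\Theta$, $(\Theta\cup\{\gamma\})\setminus\{\sigma\}\vdash\sigma'$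 for some $\sigma'\in\overline{\sigma}$. $\Theta\subseteq\mathcal{S}$ is $\mathcal{AF}_{\vdash}(\mathcal{S})$-inconsistent iff there are $\Theta'\subseteq\Theta$ and $\gamma\in\Theta'$ with $\Theta'\setminus\{\gamma\}\vdash\gamma'$ for some $\gamma'\in\overline{\gamma}$, consistent otherwise; maximal consistent = consistent with no consistent proper superset within $\mathcal{S}$. $\vdash_{\mathsf{con}}=\{(\Gamma,\gamma):\Gamma\vdash\gamma,\ \Gamma\text{ consistent}\}$ and $\mathcal{AF}_{\mathsf{con}}(\mathcal{S})=\mathcal{AF}_{\vdash_{\mathsf{con}}}(\mathcal{S})$. *)

theory Defs
  imports Main
begin

type_synonym 'f cons_rel = "('f set \<times> 'f) set"

definition Arg :: "'f cons_rel \<Rightarrow> 'f set \<Rightarrow> ('f set \<times> 'f) set" where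
  "Arg D S = {(\<Gamma>, \<gamma>). \<Gamma> \<subseteq> S \<and> finite \<Gamma> \<and> (\<Gamma>, \<gamma>) \<in> D}"

definition attacks :: "('f \<Rightarrow> 'f set) \<Rightarrow> ('f set \<times> 'f) \<Rightarrow> ('f set \<times> 'f) \<Rightarrow> bool" where
  "attacks ctr a b \<longleftrightarrow> (\<exists>l\<in>fst b. snd a \<in> ctr l)"

definition stable_extension :: "'f cons_rel \<Rightarrow> ('f \<Rightarrow> 'f set) \<Rightarrow> 'f set \<Rightarrow> ('f set \<times> 'f) set \<Rightarrow> bool" where
  "stable_extension D ctr S E \<longleftrightarrow>
     E \<subseteq> Arg D S \<and>
     (\<forall>a\<in>E. \<forall>b\<in>E. \<not> attacks ctr a b) \<and>
     (\<forall>b\<in>Arg D S - E. \<exists>a\<in>E. attacks ctr a b)"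

text \<open>The relation |-^{+phi}: transitive closure of D \<union> {({}, phi)}, i.e. the least
  relation containing it and closed under transitivity (cut on one formula).\<close>
inductive plus_rel :: "'f cons_rel \<Rightarrow> 'f \<Rightarrow> 'f set \<Rightarrow> 'f \<Rightarrow> bool" for D \<phi> where
  base: "(\<Gamma>, \<gamma>) \<in> D \<Longrightarrow> plus_rel D \<phi> \<Gamma> \<gamma>"
| ax: "plus_rel D \<phi> {} \<phi>"
| trans: "plus_rel D \<phi> \<Gamma> \<psi> \<Longrightarrow> plus_rel D \<phi> \<Delta> \<gamma> \<Longrightarrow> \<psi> \<in> \<Delta> \<Longrightarrow>
          plus_rel D \<phi> (\<Gamma> \<union> (\<Delta> - {\<psi>})) \<gamma>"

definition satisfies_cut :: "'f cons_rel \<Rightarrow> bool" where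
  "satisfies_cut D \<longleftrightarrow>
     (\<forall>\<phi> \<Gamma> \<Delta> \<gamma>. finite \<Gamma> \<longrightarrow> finite \<Delta> \<longrightarrow> (\<Gamma>, \<phi>) \<in> D \<longrightarrow> plus_rel D \<phi> \<Delta> \<gamma>
        \<longrightarrow> (\<Gamma> \<union> \<Delta>, \<gamma>) \<in> D)"

definition contrapositable :: "'f cons_rel \<Rightarrow> ('f \<Rightarrow> 'f set) \<Rightarrow> bool" where
  "contrapositable D ctr \<longleftrightarrow>
     (\<forall>\<Theta> \<gamma> \<gamma>'. finite \<Theta> \<longrightarrow> (\<Theta>, \<gamma>') \<in> D \<longrightarrow> \<gamma>' \<in> ctr \<gamma> \<longrightarrow>
        (\<forall>\<sigma>\<in>\<Theta>. \<exists>\<sigma>'\<in>ctr \<sigma>. ((\<Theta> \<union> {\<gamma>}) - {\<sigma>}, \<sigma>') \<in> D))"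

definition inconsistent :: "'f cons_rel \<Rightarrow> ('f \<Rightarrow> 'f set) \<Rightarrow> 'f set \<Rightarrow> bool" where
  "inconsistent D ctr \<Theta> \<longleftrightarrow>
     (\<exists>\<Theta>'\<subseteq>\<Theta>. \<exists>\<gamma>\<in>\<Theta>'. \<exists>\<gamma>'\<in>ctr \<gamma>. (\<Theta>' - {\<gamma>}, \<gamma>') \<in> D)"

abbreviation consistent :: "'f cons_rel \<Rightarrow> ('f \<Rightarrow> 'f set) \<Rightarrow> 'f set \<Rightarrow> bool" where
  "consistent D ctr \<Theta> \<equiv> \<not> inconsistent D ctr \<Theta>"

definition maximal_consistent :: "'f cons_rel \<Rightarrow> ('f \<Rightarrow> 'f set) \<Rightarrow> 'f set \<Rightarrow> 'f set \<Rightarrow> bool" where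
  "maximal_consistent D ctr S \<Theta> \<longleftrightarrow>
     \<Theta> \<subseteq> S \<and> consistent D ctr \<Theta> \<and>
     (\<forall>\<Theta>'. \<Theta> \<subset> \<Theta>' \<and> \<Theta>' \<subseteq> S \<longrightarrow> \<not> consistent D ctr \<Theta>')"

definition con_rel :: "'f cons_rel \<Rightarrow> ('f \<Rightarrow> 'f set) \<Rightarrow> 'f cons_rel" where
  "con_rel D ctr = {(\<Gamma>, \<gamma>). (\<Gamma>, \<gamma>) \<in> D \<and> consistent D ctr \<Gamma>}"

end

theory Submission
  imports Defs
begin

text \<open>Contraposition lets a contrary be moved onto any premise, so a set is inconsistent
  exactly when some subset of it derives a contrary of one of its members. Hence the
  arguments built from a consistent \<Theta> never attack each other; and if an argument has a
  premise l outside \<Theta>, maximality makes \<Theta> \<union> {l} inconsistent, whence \<Theta> itself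
  derives a contrary of l, i.e. an argument on \<Theta> attacks it.\<close>

lemma inconsistent_mono: "inconsistent D ctr A \<Longrightarrow> A \<subseteq> B \<Longrightarrow> inconsistent D ctr B"
  unfolding inconsistent_def by (meson order_trans)

lemma contrapositable_rotate:
  assumes contra: "contrapositable D ctr" and fin: "\<forall>(\<Gamma>, \<gamma>)\<in>D. finite \<Gamma>"
    and derives: "(T - {g}, g') \<in> D" and "g \<in> T" "g' \<in> ctr g" "l \<in> T"
  obtains l' where "l' \<in> ctr l" "(T - {l}, l') \<in> D"
proof (cases "l = g")
  case True
  then show ?thesis using that assms by blast
next
  case False
  have "finite (T - {g})" using fin derives by auto
  then obtain l' where "l' \<in> ctr l" "((T - {g}) \<union> {g} - {l}, l') \<in> D"
    using contra derives \<open>g' \<in> ctr g\<close> \<open>l \<in> T\<close> False unfolding contrapositable_def by blast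
  moreover have "(T - {g}) \<union> {g} - {l} = T - {l}" using \<open>g \<in> T\<close> by auto
  ultimately show ?thesis using that by simp
qed

lemma inconsistentI_contrary:
  assumes contra: "contrapositable D ctr" and fin: "\<forall>(\<Gamma>, \<gamma>)\<in>D. finite \<Gamma>"
    and derives: "(\<Gamma>, g) \<in> D" and "g \<in> ctr l" "\<Gamma> \<subseteq> A" "l \<in> A"
  shows "inconsistent D ctr A"
proof -
  obtain l' where l': "l' \<in> ctr l" "(\<Gamma> \<union> {l} - {l}, l') \<in> D"
  proof (cases "l \<in> \<Gamma>")
    case True
    have "finite \<Gamma>" using fin derives by auto
    then show ?thesis
      using that contra derives \<open>g \<in> ctr l\<close> True unfolding contrapositable_def by blast
  next
    case False
    then have "\<Gamma> \<union> {l} - {l} = \<Gamma>" by auto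
    then show ?thesis using that derives \<open>g \<in> ctr l\<close> by auto
  qed
  show ?thesis
    unfolding inconsistent_def using l' assms(5,6) by (intro exI[of _ "\<Gamma> \<union> {l}"]) auto
qed

lemma inconsistent_insert_derives_contrary:
  assumes contra: "contrapositable D ctr" and fin: "\<forall>(\<Gamma>, \<gamma>)\<in>D. finite \<Gamma>"
    and "inconsistent D ctr (insert l A)" and "consistent D ctr A"
  obtains \<Gamma> l' where "\<Gamma> \<subseteq> A" "l' \<in> ctr l" "(\<Gamma>, l') \<in> D"
proof -
  obtain T g g' where T: "T \<subseteq> insert l A" "g \<in> T" "g' \<in> ctr g" "(T - {g}, g') \<in> D"
    using \<open>inconsistent D ctr (insert l A)\<close> unfolding inconsistent_def by blast
  have "l \<in> T"
  proof (rule ccontr)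
    assume "l \<notin> T"
    then have "T \<subseteq> A" using T(1) by auto
    then show False using T \<open>consistent D ctr A\<close> unfolding inconsistent_def by blast
  qed
  then obtain l' where "l' \<in> ctr l" "(T - {l}, l') \<in> D"
    using contrapositable_rotate[OF contra fin T(4,2,3)] by blast
  moreover have "T - {l} \<subseteq> A" using T(1) by auto
  ultimately show ?thesis using that by blast
qed

lemma Arg_subset_Arg_con_rel:
  assumes "consistent D ctr \<Theta>" and "\<Theta> \<subseteq> S"
  shows "Arg D \<Theta> \<subseteq> Arg (con_rel D ctr) S"
  using assms inconsistent_mono unfolding Arg_def con_rel_def by blast

lemma Arg_consistent_conflict_free:
  assumes contra: "contrapositable D ctr" and fin: "\<forall>(\<Gamma>, \<gamma>)\<in>D. finite \<Gamma>"
    and cons: "consistent D ctr \<Theta>" and a: "(\<Gamma>, g) \<in> Arg D \<Theta>" and b: "b \<in> Arg D \<Theta>"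
  shows "\<not> attacks ctr (\<Gamma>, g) b"
proof
  assume "attacks ctr (\<Gamma>, g) b"
  then obtain l where "l \<in> fst b" "g \<in> ctr l" unfolding attacks_def by auto
  moreover have "l \<in> \<Theta>" using \<open>l \<in> fst b\<close> b unfolding Arg_def by auto
  ultimately have "inconsistent D ctr \<Theta>"
    using inconsistentI_contrary[OF contra fin] a unfolding Arg_def by blast
  then show False using cons by blast
qed

theorem lemma9:
  fixes D :: "'f cons_rel" and ctr :: "'f \<Rightarrow> 'f set" and S \<Theta> :: "'f set"
  assumes fin: "\<forall>(\<Gamma>, \<gamma>)\<in>D. finite \<Gamma>"
    and contra: "contrapositable D ctr"
    and cut: "satisfies_cut D"
    and max: "maximal_consistent D ctr S \<Theta>"
  shows "stable_extension (con_rel D ctr) ctr S (Arg D \<Theta>)"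
proof -
  have \<Theta>S: "\<Theta> \<subseteq> S" and cons: "consistent D ctr \<Theta>"
    and maximal: "\<And>\<Theta>'. \<Theta> \<subset> \<Theta>' \<Longrightarrow> \<Theta>' \<subseteq> S \<Longrightarrow> inconsistent D ctr \<Theta>'"
    using max unfolding maximal_consistent_def by auto
  have attacks_outside: "\<exists>a\<in>Arg D \<Theta>. attacks ctr a b"
    if "b \<in> Arg (con_rel D ctr) S - Arg D \<Theta>" for b
  proof -
    have "fst b \<subseteq> S" "\<not> fst b \<subseteq> \<Theta>"
      using that unfolding Arg_def con_rel_def by auto
    then obtain l where l: "l \<in> fst b" "l \<in> S" "l \<notin> \<Theta>" by blast
    have "inconsistent D ctr (insert l \<Theta>)" using maximal l \<Theta>S by blast
    then obtain \<Gamma> l' where "\<Gamma> \<subseteq> \<Theta>" "l' \<in> ctr l" "(\<Gamma>, l') \<in> D"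
      using inconsistent_insert_derives_contrary[OF contra fin _ cons] by blast
    then have "(\<Gamma>, l') \<in> Arg D \<Theta>" and "attacks ctr (\<Gamma>, l') b"
      using fin l(1) unfolding Arg_def attacks_def by auto
    then show ?thesis by blast
  qed
  show ?thesis
    unfolding stable_extension_def
    using Arg_subset_Arg_con_rel[OF cons \<Theta>S] Arg_consistent_conflict_free[OF contra fin cons]
      attacks_outside
    by fast
qed

end
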